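(* Let $f:\{0,1\}^{10}\to\{0,1\}$ be fully sensitive at $0$ with $d(f)\le 4$. Then the symmetrization polynomial of $f$ is \[ \tilde{p}(x) = -\frac{x^{4}}{144}+\frac{5 x^{3}}{36}-\frac{125 x^{2}}{144}+\frac{125 x}{72}. \]
   Context: $d(f)$ is the degree of the unique multilinear real polynomial $q$ agreeing with $f$ on $\{0,1\}^{10}$. $f$ is fully sensitive at $0$ if $f(0)=0$ and $f(e_i)=1$ for every unit vector $e_i$. The symmetrization polynomial of $f$ is the univariate real polynomial $p$ of degree at most $d(f)$ with $p(x_1+\dots+x_{10})=\frac{1}{10!}\sum_{\pi\in S_{10}} q(\pi(x))$ for all $x\in\{0,1\}^{10}$ ($\pi(x)$ permutes coordinates); equivalently $p(k)$ is the fraction of inputs of Hamming weight $k$ on which $f=1$, for $k=0,\dots,10$. *)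

theory Defs
  imports Main "HOL-Computational_Algebra.Polynomial"
begin

text \<open>A Boolean function on {0,1}^n is represented as f :: nat set => bool, where an input
  x is identified with its support {i < n. x_i = 1}; only subsets of {0..<n} matter.
  A multilinear real polynomial in x_0..x_(n-1) is represented by its coefficient function
  c :: nat set => real (coefficient of the monomial prod_(i in T) x_i); its value at the
  input with support S is sum_(T subseteq S) c T.\<close>

definition multilin_agrees :: "nat \<Rightarrow> (nat set \<Rightarrow> bool) \<Rightarrow> (nat set \<Rightarrow> real) \<Rightarrow> bool" where
  "multilin_agrees n f c \<longleftrightarrow>
     (\<forall>T. c T \<noteq> 0 \<longrightarrow> T \<subseteq> {0..<n}) \<and>
     (\<forall>S. S \<subseteq> {0..<n} \<longrightarrow> (if f S then 1 else 0) = (\<Sum>T\<in>Pow S. c T))"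

definition bdeg :: "nat \<Rightarrow> (nat set \<Rightarrow> bool) \<Rightarrow> nat" where
  "bdeg n f = (LEAST d. \<exists>c. multilin_agrees n f c \<and> (\<forall>T. c T \<noteq> 0 \<longrightarrow> card T \<le> d))"

definition fully_sensitive_at_0 :: "nat \<Rightarrow> (nat set \<Rightarrow> bool) \<Rightarrow> bool" where
  "fully_sensitive_at_0 n f \<longleftrightarrow> \<not> f {} \<and> (\<forall>i<n. f {i})"

definition is_symmetrization :: "nat \<Rightarrow> (nat set \<Rightarrow> bool) \<Rightarrow> real poly \<Rightarrow> bool" where
  "is_symmetrization n f p \<longleftrightarrow> degree p \<le> bdeg n f \<and>
     (\<forall>k\<le>n. poly p (real k) =
        real (card {S. S \<subseteq> {0..<n} \<and> card S = k \<and> f S}) / real (n choose k))"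

end

theory Submission
  imports Defs
begin

text \<open>Let \<open>a\<^sub>j\<close> be the sum of the coefficients of \<open>q\<close> on monomials of degree \<open>j\<close>. Counting
  pairs (monomial, input) shows that \<open>N\<^sub>k\<close>, the number of weight-\<open>k\<close> inputs with \<open>f = 1\<close>, is
  \<open>\<Sum>\<^sub>j a\<^sub>j C(10-j, k-j)\<close>, i.e. \<open>p(x) = \<Sum>\<^sub>j a\<^sub>j C(x,j) / C(10,j)\<close>. Full sensitivity gives
  \<open>a\<^sub>0 = 0\<close>, \<open>a\<^sub>1 = 10\<close>, and \<open>d(f) \<le> 4\<close> kills \<open>a\<^sub>j\<close> for \<open>j > 4\<close>. Since \<open>p\<close> has degree at most 4,
  its values at 0, 1, 2, 5, 8, 10 satisfy the Lagrange relation
  \<open>p(1)/252 = p(0)/800 + p(2)/288 - p(5)/900 + p(8)/2016 - p(10)/7200\<close>; with \<open>p(0) = 0\<close>,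
  \<open>p(1) = 1\<close> and \<open>0 \<le> p \<le> 1\<close> on \<open>{0..10}\<close>, and \<open>1/288 + 1/2016 = 1/252\<close>, this forces
  \<open>p(2) = p(8) = 1\<close> and \<open>p(5) = p(10) = 0\<close>, which pins down \<open>a\<^sub>2, a\<^sub>3, a\<^sub>4\<close> and hence \<open>p\<close>.
  As \<open>a\<^sub>4 \<noteq> 0\<close>, in fact \<open>d(f) = 4 = deg p\<close>.\<close>

lemma card_supersets_with_card:
  assumes "finite N" "T \<subseteq> N" "card T \<le> k"
  shows "card {S. S \<subseteq> N \<and> card S = k \<and> T \<subseteq> S} = (card N - card T) choose (k - card T)"
proof -
  have "finite T" using assms finite_subset by blast
  have "bij_betw (\<lambda>U. U \<union> T) {U. U \<subseteq> N - T \<and> card U = k - card T}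
                              {S. S \<subseteq> N \<and> card S = k \<and> T \<subseteq> S}"
  proof (rule bij_betw_byWitness[where f' = "\<lambda>S. S - T"])
    show "(\<lambda>U. U \<union> T) ` {U. U \<subseteq> N - T \<and> card U = k - card T} \<subseteq> {S. S \<subseteq> N \<and> card S = k \<and> T \<subseteq> S}"
    proof clarify
      fix U assume U: "U \<subseteq> N - T" "card U = k - card T"
      then have "finite U" "U \<inter> T = {}" using assms(1) finite_subset by auto
      then have "card (U \<union> T) = k" using U(2) assms(3) \<open>finite T\<close> by (simp add: card_Un_disjoint)
      then show "U \<union> T \<subseteq> N \<and> card (U \<union> T) = k \<and> T \<subseteq> U \<union> T" using U(1) assms(2) by auto
    qed
  qed (use assms \<open>finite T\<close> in \<open>auto simp: card_Diff_subset\<close>)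
  then have "card {S. S \<subseteq> N \<and> card S = k \<and> T \<subseteq> S} = card {U. U \<subseteq> N - T \<and> card U = k - card T}"
    by (simp add: bij_betw_same_card)
  also have "\<dots> = (card N - card T) choose (k - card T)"
    using assms \<open>finite T\<close> by (simp add: n_subsets card_Diff_subset)
  finally show ?thesis .
qed

lemma multilin_agrees_exists: "\<exists>c. multilin_agrees n f c"
proof -
  define F where "F S = (if f S then 1 else 0 :: real)" for S
  define g where "g S = (\<Sum>T\<in>Pow S. (-1) ^ card T * F T)" for S
  define c where "c T = (if T \<subseteq> {0..<n} then (-1) ^ card T * g T else 0)" for T
  have "multilin_agrees n f c"
    unfolding multilin_agrees_def
  proof (intro conjI allI impI)
    fix T assume "c T \<noteq> 0"
    then show "T \<subseteq> {0..<n}" by (simp add: c_def split: if_splits)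
  next
    fix S assume S: "S \<subseteq> {0..<n}"
    then have "finite S" by (rule finite_subset) simp
    then have "F S = (\<Sum>T\<in>Pow S. (-1) ^ card T * g T)"
      by (rule inclusion_exclusion_symmetric[rotated]) (simp add: g_def)
    also have "\<dots> = (\<Sum>T\<in>Pow S. c T)"
      using S by (intro sum.cong) (auto simp: c_def)
    finally show "(if f S then 1 else 0) = (\<Sum>T\<in>Pow S. c T)"
      by (simp add: F_def)
  qed
  then show ?thesis by blast
qed

lemma bdeg_witness:
  obtains c where "multilin_agrees n f c" "\<forall>T. c T \<noteq> 0 \<longrightarrow> card T \<le> bdeg n f"
proof -
  obtain c where c: "multilin_agrees n f c" using multilin_agrees_exists by blast
  have "card T \<le> n" if "c T \<noteq> 0" for T
    using c that card_mono[of "{0..<n}" T] unfolding multilin_agrees_def by auto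
  then have "\<exists>d c. multilin_agrees n f c \<and> (\<forall>T. c T \<noteq> 0 \<longrightarrow> card T \<le> d)"
    using c by blast
  from LeastI_ex[OF this] show ?thesis
    using that unfolding bdeg_def by blast
qed

definition level_sum :: "nat \<Rightarrow> (nat set \<Rightarrow> real) \<Rightarrow> nat \<Rightarrow> real" where
  "level_sum n c j = (\<Sum>T | T \<subseteq> {0..<n} \<and> card T = j. c T)"

lemma level_sum_eq_0_above_degree:
  assumes "\<forall>T. c T \<noteq> 0 \<longrightarrow> card T \<le> d" "d < j"
  shows "level_sum n c j = 0"
  unfolding level_sum_def using assms by (intro sum.neutral) fastforce

lemma card_true_inputs_of_weight:
  assumes "multilin_agrees n f c"
  shows "real (card {S. S \<subseteq> {0..<n} \<and> card S = k \<and> f S})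
           = (\<Sum>j\<le>k. level_sum n c j * ((n - j) choose (k - j)))"
proof -
  define A where "A = {S. S \<subseteq> {0..<n} \<and> card S = k}"
  define D where "D = {T. T \<subseteq> {0..<n} \<and> card T \<le> k}"
  have "finite A" "finite D"
    unfolding A_def D_def by (auto intro: finite_subset[of _ "Pow {0..<n}"])
  have Pow_eq: "Pow S = {T \<in> D. T \<subseteq> S}" if "S \<in> A" for S
  proof -
    have "finite S" "S \<subseteq> {0..<n}" "card S = k"
      using that finite_subset unfolding A_def by auto
    then show ?thesis
      unfolding D_def using card_mono by blast
  qed
  have supersets: "card {S \<in> A. T \<subseteq> S} = (n - card T) choose (k - card T)" if "T \<in> D" for T
  proof -
    have "{S \<in> A. T \<subseteq> S} = {S. S \<subseteq> {0..<n} \<and> card S = k \<and> T \<subseteq> S}"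
      unfolding A_def by auto
    then show ?thesis
      using that card_supersets_with_card[of "{0..<n}" T k] unfolding D_def by simp
  qed
  have "real (card {S. S \<subseteq> {0..<n} \<and> card S = k \<and> f S}) = (\<Sum>S\<in>A. if f S then 1 else 0)"
    using sum.inter_filter[OF \<open>finite A\<close>, of "\<lambda>_. 1::real" f] by (simp add: A_def conj_assoc)
  also have "\<dots> = (\<Sum>S\<in>A. \<Sum>T\<in>{T \<in> D. T \<subseteq> S}. c T)"
    using assms Pow_eq unfolding multilin_agrees_def A_def by (intro sum.cong) auto
  also have "\<dots> = (\<Sum>T\<in>D. \<Sum>S\<in>{S \<in> A. T \<subseteq> S}. c T)"
    using \<open>finite A\<close> \<open>finite D\<close> by (rule sum.swap_restrict)
  also have "\<dots> = (\<Sum>T\<in>D. c T * ((n - card T) choose (k - card T)))"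
    using supersets by (intro sum.cong) auto
  also have "\<dots> = (\<Sum>j\<le>k. \<Sum>T\<in>{T \<in> D. card T = j}. c T * ((n - card T) choose (k - card T)))"
    using \<open>finite D\<close> by (intro sum.group[symmetric]) (auto simp: D_def)
  also have "\<dots> = (\<Sum>j\<le>k. level_sum n c j * ((n - j) choose (k - j)))"
  proof (intro sum.cong)
    fix j assume "j \<in> {..k}"
    then have "{T \<in> D. card T = j} = {T. T \<subseteq> {0..<n} \<and> card T = j}"
      unfolding D_def by auto
    then show "(\<Sum>T\<in>{T \<in> D. card T = j}. c T * ((n - card T) choose (k - card T)))
               = level_sum n c j * ((n - j) choose (k - j))"
      unfolding level_sum_def sum_distrib_right by (intro sum.cong) auto
  qed simp
  finally show ?thesis .
qed

lemma card_true_inputs_of_weight_le: "card {S. S \<subseteq> {0..<n} \<and> card S = k \<and> f S} \<le> n choose k"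
proof -
  have "card {S. S \<subseteq> {0..<n} \<and> card S = k \<and> f S} \<le> card {S. S \<subseteq> {0..<n} \<and> card S = k}"
    by (rule card_mono) (auto intro: finite_subset[of _ "Pow {0..<n}"])
  then show ?thesis by (simp add: n_subsets)
qed

lemma fully_sensitive_level_sums:
  assumes "fully_sensitive_at_0 n f" "multilin_agrees n f c"
  shows "level_sum n c 0 = 0" "level_sum n c 1 = n"
proof -
  have "{S. S \<subseteq> {0..<n} \<and> card S = 0 \<and> f S} = {}"
    using assms(1) by (auto simp: fully_sensitive_at_0_def dest: finite_subset)
  with card_true_inputs_of_weight[OF assms(2), of 0] show "level_sum n c 0 = 0"
    by simp
  have "{S. S \<subseteq> {0..<n} \<and> card S = 1 \<and> f S} = {S. S \<subseteq> {0..<n} \<and> card S = 1}"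
    using assms(1) by (auto simp: fully_sensitive_at_0_def card_1_singleton_iff)
  with card_true_inputs_of_weight[OF assms(2), of 1] \<open>level_sum n c 0 = 0\<close>
  show "level_sum n c 1 = n"
    by (simp add: n_subsets)
qed

lemma level_sums_forced:
  fixes a :: "nat \<Rightarrow> real"
  assumes "a 0 = 0" "a 1 = 10" "\<And>j. 4 < j \<Longrightarrow> a j = 0"
    and "(\<Sum>j\<le>2. a j * ((10 - j) choose (2 - j))) \<le> 10 choose 2"
    and "0 \<le> (\<Sum>j\<le>5. a j * ((10 - j) choose (5 - j)))"
    and "(\<Sum>j\<le>8. a j * ((10 - j) choose (8 - j))) \<le> 10 choose 8"
    and "0 \<le> (\<Sum>j\<le>10. a j * ((10 - j) choose (10 - j)))"
  shows "a 2 = -45 \<and> a 3 = 70 \<and> a 4 = -35"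
  using assms by (simp add: numeral_eq_Suc)

lemma symmetrization_values:
  fixes a :: "nat \<Rightarrow> real"
  assumes "a 0 = 0" "a 1 = 10" "a 2 = -45" "a 3 = 70" "a 4 = -35"
    and "\<And>j. 4 < j \<Longrightarrow> a j = 0" and "k \<le> 10"
  shows "poly [:0, 125/72, -125/144, 5/36, -1/144:] (real k)
           = (\<Sum>j\<le>k. a j * ((10 - j) choose (k - j))) / (10 choose k)"
proof -
  have "k \<in> {0, 1, 2, 3, 4, 5, 6, 7, 8, 9, 10}"
    using \<open>k \<le> 10\<close> by (simp only: insert_iff empty_iff) presburger
  then show ?thesis
    using assms by (auto simp: numeral_eq_Suc)
qed

theorem theorem11:
  fixes f :: "nat set \<Rightarrow> bool"
  assumes "fully_sensitive_at_0 10 f"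
    and "bdeg 10 f \<le> 4"
  shows "is_symmetrization 10 f [:0, 125/72, -125/144, 5/36, -1/144:]"
proof -
  obtain c where agree: "multilin_agrees 10 f c"
    and deg: "\<forall>T. c T \<noteq> 0 \<longrightarrow> card T \<le> bdeg 10 f"
    by (rule bdeg_witness)
  define a where "a = level_sum 10 c"
  define N where "N k = card {S. S \<subseteq> {0..<10} \<and> card S = k \<and> f S}" for k
  have N_eq: "real (N k) = (\<Sum>j\<le>k. a j * ((10 - j) choose (k - j)))" for k
    unfolding N_def a_def using agree by (rule card_true_inputs_of_weight)
  have N_le: "real (N k) \<le> 10 choose k" for k
    unfolding N_def using card_true_inputs_of_weight_le of_nat_mono by blast
  have high: "a j = 0" if "4 < j" for j
    unfolding a_def using deg assms(2) that by (intro level_sum_eq_0_above_degree) auto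
  have low: "a 0 = 0" "a 1 = 10"
    using fully_sensitive_level_sums[OF assms(1) agree] by (simp_all add: a_def)
  have mid: "a 2 = -45 \<and> a 3 = 70 \<and> a 4 = -35"
    by (intro level_sums_forced low high) (simp_all only: N_eq[symmetric] N_le of_nat_0_le_iff)
  have "4 \<le> bdeg 10 f"
    using mid level_sum_eq_0_above_degree[OF deg, of 4 10] unfolding a_def by fastforce
  moreover have "poly [:0, 125/72, -125/144, 5/36, -1/144:] (real k) = N k / (10 choose k)"
    if "k \<le> 10" for k
    unfolding N_eq using symmetrization_values low mid high that by blast
  ultimately show ?thesis
    unfolding is_symmetrization_def N_def by simp
qed

end
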